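(* Let $b>0$ and $\varepsilon\in\mathbb{R}$. If $u(t,x)$ solves $u_t=xu_{xx}+bu_x$, then $$\tilde u_\varepsilon(t,x)=(1+\varepsilon t)^{-b}\exp\!\left(\frac{-\varepsilon x}{1+\varepsilon t}\right)u\!\left(\frac{t}{1+\varepsilon t},\ \frac{x}{(1+\varepsilon t)^2}\right)$$ is also a solution wherever $1+\varepsilon t>0$ and the argument lies in the domain of $u$. In particular, for constants $c_0,c_1$, $$u_\varepsilon(t,x)=(1+\varepsilon t)^{-b}\exp\!\left(\frac{-\varepsilon x}{1+\varepsilon t}\right)\left[c_0+c_1(1+\varepsilon t)^{2(b-1)}x^{1-b}\right]\ (b\neq1),$$ $$u_\varepsilon(t,x)=(1+\varepsilon t)^{-1}\exp\!\left(\frac{-\varepsilon x}{1+\varepsilon t}\right)\left[c_0+c_1\log\frac{\sqrt x}{1+\varepsilon t}\right]\ (b=1),$$ are solutions for $x>0$, $1+\varepsilon t>0$. *)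

theory Defs
  imports "HOL-Analysis.Analysis"
begin

definition solves_pde :: "real \<Rightarrow> (real \<times> real) set \<Rightarrow> (real \<Rightarrow> real \<Rightarrow> real) \<Rightarrow> bool" where
  "solves_pde b D u \<longleftrightarrow>
     (\<exists>ut ux uxx :: real \<Rightarrow> real \<Rightarrow> real. \<forall>t x. (t, x) \<in> D \<longrightarrow>
        ((\<lambda>p. u (fst p) (snd p)) has_derivative (\<lambda>h. ut t x * fst h + ux t x * snd h)) (at (t, x))
      \<and> ((\<lambda>y. ux t y) has_real_derivative uxx t x) (at x)
      \<and> ut t x = x * uxx t x + b * ux t x)"

end

theory Submission
  imports Defs
begin

text \<open>With \<open>s = 1 + \<epsilon> t\<close>, the change of variables \<open>\<tau> = t / s\<close>, \<open>\<xi> = x / s^2\<close> combined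
  with the multiplier \<open>M = s powr (-b) exp (-\<epsilon> x / s)\<close> is a point symmetry of
  \<open>u_t = x u_xx + b u_x\<close>. For \<open>w(t, x) = M u(\<tau>, \<xi>)\<close> the chain rule gives
  \<open>w_t - x w_xx - b w_x = M / s^2 (u_\<tau> - \<xi> u_\<xi>\<xi> - b u_\<xi>)\<close>: the terms produced by
  differentiating \<open>M\<close> cancel exactly against those produced by the \<open>t\<close>-dependence of \<open>\<xi>\<close>.
  The explicit families are the images of the stationary solutions \<open>c0 + c1 x powr (1 - b)\<close>
  and, for \<open>b = 1\<close>, \<open>c0 + c1 ln (sqrt x)\<close>.\<close>

lemma solves_pde_cong:
  assumes "solves_pde b D u" and "open D" and "\<And>t x. (t, x) \<in> D \<Longrightarrow> u t x = v t x"
  shows "solves_pde b D v"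
  using assms(1) unfolding solves_pde_def
proof (elim exE, intro exI allI impI conjI)
  fix ut ux uxx t x
  assume u: "\<forall>t x. (t, x) \<in> D \<longrightarrow>
      ((\<lambda>p. u (fst p) (snd p)) has_derivative (\<lambda>h. ut t x * fst h + ux t x * snd h)) (at (t, x))
    \<and> ((\<lambda>y. ux t y) has_real_derivative uxx t x) (at x)
    \<and> ut t x = x * uxx t x + b * ux t x"
    and tx: "(t, x) \<in> D"
  have "((\<lambda>p. u (fst p) (snd p)) has_derivative (\<lambda>h. ut t x * fst h + ux t x * snd h)) (at (t, x))"
    using u tx by blast
  then show "((\<lambda>p. v (fst p) (snd p)) has_derivative (\<lambda>h. ut t x * fst h + ux t x * snd h)) (at (t, x))"
    by (rule has_derivative_transform_within_open[OF _ assms(2) tx]) (metis assms(3) prod.collapse)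
  show "((\<lambda>y. ux t y) has_real_derivative uxx t x) (at x)" and "ut t x = x * uxx t x + b * ux t x"
    using u tx by blast+
qed

lemma has_real_derivative_partial_snd:
  fixes f :: "real \<Rightarrow> real \<Rightarrow> real"
  assumes "((\<lambda>p. f (fst p) (snd p)) has_derivative (\<lambda>h. a * fst h + c * snd h)) (at (t, x))"
  shows "(f t has_real_derivative c) (at x)"
proof -
  have "((\<lambda>y. (t, y)) has_derivative (\<lambda>h. (0, h))) (at x)"
    by (auto intro!: derivative_eq_intros)
  from has_derivative_compose[OF this assms] show ?thesis
    by (simp add: has_field_derivative_def mult_commute_abs)
qed

lemma has_derivative_appell_factor:
  fixes b \<epsilon> t x :: real
  defines "s \<equiv> 1 + \<epsilon> * t"
  assumes "s > 0"
  shows "((\<lambda>p. (1 + \<epsilon> * fst p) powr (- b) * exp (- \<epsilon> * snd p / (1 + \<epsilon> * fst p))) has_derivative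
     (\<lambda>h. s powr (- b) * exp (- \<epsilon> * x / s) *
        ((\<epsilon>\<^sup>2 * x / s\<^sup>2 - b * \<epsilon> / s) * fst h - \<epsilon> / s * snd h))) (at (t, x))"
  apply (rule has_derivative_eq_rhs)
   apply (rule derivative_eq_intros refl | (insert assms, simp; fail))+
  using assms by (auto simp: fun_eq_iff s_def[symmetric] field_simps power2_eq_square)

lemma has_derivative_appell_coords:
  fixes \<epsilon> t x :: real
  defines "s \<equiv> 1 + \<epsilon> * t"
  assumes "s > 0"
  shows "((\<lambda>p. (fst p / (1 + \<epsilon> * fst p), snd p / (1 + \<epsilon> * fst p)\<^sup>2)) has_derivative
     (\<lambda>h. (fst h / s\<^sup>2, snd h / s\<^sup>2 - 2 * \<epsilon> * x / s ^ 3 * fst h))) (at (t, x))"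
  apply (rule has_derivative_eq_rhs)
   apply (rule derivative_eq_intros refl | (insert assms, simp; fail))+
  using assms
   apply (auto simp: fun_eq_iff s_def[symmetric] field_simps power2_eq_square power3_eq_cube)
  apply (simp add: s_def algebra_simps)
  done

lemma has_derivative_appell_transform:
  fixes u :: "real \<Rightarrow> real \<Rightarrow> real" and b \<epsilon> t x Ut Ux :: real
  defines "s \<equiv> 1 + \<epsilon> * t"
  assumes "s > 0"
    and du: "((\<lambda>p. u (fst p) (snd p)) has_derivative (\<lambda>h. Ut * fst h + Ux * snd h)) (at (t / s, x / s\<^sup>2))"
  shows "((\<lambda>p. (1 + \<epsilon> * fst p) powr (- b) * exp (- \<epsilon> * snd p / (1 + \<epsilon> * fst p))
              * u (fst p / (1 + \<epsilon> * fst p)) (snd p / (1 + \<epsilon> * fst p)\<^sup>2)) has_derivative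
     (\<lambda>h. s powr (- b) * exp (- \<epsilon> * x / s) *
        (((\<epsilon>\<^sup>2 * x / s\<^sup>2 - b * \<epsilon> / s) * u (t / s) (x / s\<^sup>2) + Ut / s\<^sup>2 - 2 * \<epsilon> * x / s ^ 3 * Ux) * fst h
         + (Ux / s\<^sup>2 - \<epsilon> / s * u (t / s) (x / s\<^sup>2)) * snd h))) (at (t, x))"
proof -
  have "((\<lambda>p. u (fst p) (snd p)) has_derivative (\<lambda>h. Ut * fst h + Ux * snd h))
      (at ((\<lambda>p. (fst p / (1 + \<epsilon> * fst p), snd p / (1 + \<epsilon> * fst p)\<^sup>2)) (t, x)))"
    using du by (simp add: s_def)
  from has_derivative_compose[OF has_derivative_appell_coords[OF assms(2)[unfolded s_def]] this]
  have "((\<lambda>p. u (fst p / (1 + \<epsilon> * fst p)) (snd p / (1 + \<epsilon> * fst p)\<^sup>2)) has_derivative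
      (\<lambda>h. Ut * (fst h / s\<^sup>2) + Ux * (snd h / s\<^sup>2 - 2 * \<epsilon> * x / s ^ 3 * fst h))) (at (t, x))"
    by (simp add: s_def)
  from has_derivative_mult[OF has_derivative_appell_factor[OF assms(2)[unfolded s_def]] this]
  show ?thesis
    by (rule has_derivative_eq_rhs) (simp add: fun_eq_iff s_def[symmetric] algebra_simps)
qed

lemma has_real_derivative_appell_ux:
  fixes u ux :: "real \<Rightarrow> real \<Rightarrow> real" and b \<epsilon> t x Ut Uxx :: real
  defines "s \<equiv> 1 + \<epsilon> * t"
  assumes "s > 0"
    and du: "((\<lambda>p. u (fst p) (snd p)) has_derivative (\<lambda>h. Ut * fst h + ux (t / s) (x / s\<^sup>2) * snd h))
              (at (t / s, x / s\<^sup>2))"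
    and dux: "(ux (t / s) has_real_derivative Uxx) (at (x / s\<^sup>2))"
  shows "((\<lambda>y. s powr (- b) * exp (- \<epsilon> * y / s) * (ux (t / s) (y / s\<^sup>2) / s\<^sup>2 - \<epsilon> / s * u (t / s) (y / s\<^sup>2)))
     has_real_derivative s powr (- b) * exp (- \<epsilon> * x / s) *
       (\<epsilon>\<^sup>2 / s\<^sup>2 * u (t / s) (x / s\<^sup>2) - 2 * \<epsilon> / s ^ 3 * ux (t / s) (x / s\<^sup>2) + Uxx / s ^ 4)) (at x)"
proof -
  have scale: "((\<lambda>y. y / s\<^sup>2) has_real_derivative 1 / s\<^sup>2) (at x)"
    by (intro DERIV_cdivide DERIV_ident)
  have "(u (t / s) has_real_derivative ux (t / s) (x / s\<^sup>2)) (at (x / s\<^sup>2))"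
    using du by (rule has_real_derivative_partial_snd)
  from DERIV_chain2[OF this scale] DERIV_chain2[OF dux scale] show ?thesis
    using assms(2)
    by (auto intro!: derivative_eq_intros elim!: DERIV_cong
        simp: field_simps power2_eq_square power3_eq_cube eval_nat_numeral)
qed

lemma appell_pde_defect:
  fixes s \<epsilon> b x M U Ut Ux Uxx :: real
  assumes "s \<noteq> 0"
  shows "M * ((\<epsilon>\<^sup>2 * x / s\<^sup>2 - b * \<epsilon> / s) * U + Ut / s\<^sup>2 - 2 * \<epsilon> * x / s ^ 3 * Ux)
         - x * (M * (\<epsilon>\<^sup>2 / s\<^sup>2 * U - 2 * \<epsilon> / s ^ 3 * Ux + Uxx / s ^ 4))
         - b * (M * (Ux / s\<^sup>2 - \<epsilon> / s * U))
       = M / s\<^sup>2 * (Ut - x / s\<^sup>2 * Uxx - b * Ux)"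
  using assms by (simp add: field_simps power2_eq_square power3_eq_cube eval_nat_numeral)

lemma solves_pde_appell:
  fixes b \<epsilon> :: real
  assumes "solves_pde b D u"
  shows "solves_pde b {(t, x). 1 + \<epsilon> * t > 0 \<and> (t / (1 + \<epsilon> * t), x / (1 + \<epsilon> * t)\<^sup>2) \<in> D}
    (\<lambda>t x. (1 + \<epsilon> * t) powr (- b) * exp (- \<epsilon> * x / (1 + \<epsilon> * t))
             * u (t / (1 + \<epsilon> * t)) (x / (1 + \<epsilon> * t)\<^sup>2))"
proof -
  obtain ut ux uxx where u: "\<And>t x. (t, x) \<in> D \<Longrightarrow>
        ((\<lambda>p. u (fst p) (snd p)) has_derivative (\<lambda>h. ut t x * fst h + ux t x * snd h)) (at (t, x))
      \<and> ((\<lambda>y. ux t y) has_real_derivative uxx t x) (at x)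
      \<and> ut t x = x * uxx t x + b * ux t x"
    using assms unfolding solves_pde_def by blast
  define wt where "wt t x = (let s = 1 + \<epsilon> * t in s powr (- b) * exp (- \<epsilon> * x / s) *
      ((\<epsilon>\<^sup>2 * x / s\<^sup>2 - b * \<epsilon> / s) * u (t / s) (x / s\<^sup>2) + ut (t / s) (x / s\<^sup>2) / s\<^sup>2
        - 2 * \<epsilon> * x / s ^ 3 * ux (t / s) (x / s\<^sup>2)))" for t x
  define wx where "wx t x = (let s = 1 + \<epsilon> * t in s powr (- b) * exp (- \<epsilon> * x / s) *
      (ux (t / s) (x / s\<^sup>2) / s\<^sup>2 - \<epsilon> / s * u (t / s) (x / s\<^sup>2)))" for t x
  define wxx where "wxx t x = (let s = 1 + \<epsilon> * t in s powr (- b) * exp (- \<epsilon> * x / s) *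
      (\<epsilon>\<^sup>2 / s\<^sup>2 * u (t / s) (x / s\<^sup>2) - 2 * \<epsilon> / s ^ 3 * ux (t / s) (x / s\<^sup>2)
        + uxx (t / s) (x / s\<^sup>2) / s ^ 4))" for t x
  show ?thesis
    unfolding solves_pde_def
  proof (rule exI[of _ wt], rule exI[of _ wx], rule exI[of _ wxx], intro allI impI conjI)
    fix t x
    assume "(t, x) \<in> {(t, x). 1 + \<epsilon> * t > 0 \<and> (t / (1 + \<epsilon> * t), x / (1 + \<epsilon> * t)\<^sup>2) \<in> D}"
    then have s: "1 + \<epsilon> * t > 0" and "(t / (1 + \<epsilon> * t), x / (1 + \<epsilon> * t)\<^sup>2) \<in> D"
      by auto
    note u = u[OF this(2)]
    show "((\<lambda>p. (1 + \<epsilon> * fst p) powr (- b) * exp (- \<epsilon> * snd p / (1 + \<epsilon> * fst p))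
              * u (fst p / (1 + \<epsilon> * fst p)) (snd p / (1 + \<epsilon> * fst p)\<^sup>2)) has_derivative
          (\<lambda>h. wt t x * fst h + wx t x * snd h)) (at (t, x))"
      using has_derivative_appell_transform[OF s u[THEN conjunct1], where b = b]
      by (simp add: wt_def wx_def Let_def algebra_simps)
    show "(wx t has_real_derivative wxx t x) (at x)"
      using has_real_derivative_appell_ux[where ux = ux and b = b,
          OF s u[THEN conjunct1] u[THEN conjunct2, THEN conjunct1]]
      by (simp add: wx_def[abs_def] wxx_def Let_def)
    have "wt t x - x * wxx t x - b * wx t x = 0"
      using appell_pde_defect[of "1 + \<epsilon> * t"] s u
      by (simp add: wt_def wxx_def wx_def Let_def)
    then show "wt t x = x * wxx t x + b * wx t x"
      by simp
  qed
qed

lemma solves_pde_power: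
  fixes b c0 c1 :: real
  shows "solves_pde b {(t, x). x > 0} (\<lambda>t x. c0 + c1 * x powr (1 - b))"
  unfolding solves_pde_def
proof (intro exI allI impI conjI)
  fix t x :: real
  assume "(t, x) \<in> {(t, x). x > 0}"
  then have x: "x > 0" by simp
  show "((\<lambda>p. c0 + c1 * snd p powr (1 - b)) has_derivative
      (\<lambda>h. 0 * fst h + c1 * (1 - b) * x powr (- b) * snd h)) (at (t, x))"
    using x by (auto intro!: derivative_eq_intros simp: fun_eq_iff powr_diff[of x 1 b] powr_minus field_simps)
  show "((\<lambda>y. c1 * (1 - b) * y powr (- b)) has_real_derivative c1 * (1 - b) * (- b) * x powr (- b - 1)) (at x)"
    using x by (auto intro!: derivative_eq_intros)
  have "x * x powr (- b - 1) = x powr (- b)"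
    using x by (simp add: powr_diff)
  then show "0 = x * (c1 * (1 - b) * (- b) * x powr (- b - 1)) + b * (c1 * (1 - b) * x powr (- b))"
    by (simp add: algebra_simps)
qed

lemma solves_pde_log:
  fixes c0 c1 :: real
  shows "solves_pde 1 {(t, x). x > 0} (\<lambda>t x. c0 + c1 * ln (sqrt x))"
  unfolding solves_pde_def
proof (intro exI allI impI conjI)
  fix t x :: real
  assume "(t, x) \<in> {(t, x). x > 0}"
  then have x: "x > 0" by simp
  show "((\<lambda>p. c0 + c1 * ln (sqrt (snd p))) has_derivative (\<lambda>h. 0 * fst h + c1 / (2 * x) * snd h)) (at (t, x))"
    using x by (auto intro!: derivative_eq_intros simp: fun_eq_iff field_simps)
  show "((\<lambda>y. c1 / (2 * y)) has_real_derivative - c1 / (2 * x\<^sup>2)) (at x)"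
    using x by (auto intro!: derivative_eq_intros simp: field_simps power2_eq_square)
  show "0 = x * (- c1 / (2 * x\<^sup>2)) + 1 * (c1 / (2 * x))"
    using x by (simp add: field_simps power2_eq_square)
qed

lemma solves_pde_appell_stationary:
  fixes b \<epsilon> :: real
  assumes "solves_pde b {(t, x). x > 0} u"
    and "\<And>t x. x > 0 \<Longrightarrow> 1 + \<epsilon> * t > 0 \<Longrightarrow>
      (1 + \<epsilon> * t) powr (- b) * exp (- \<epsilon> * x / (1 + \<epsilon> * t)) * u (t / (1 + \<epsilon> * t)) (x / (1 + \<epsilon> * t)\<^sup>2)
      = v t x"
  shows "solves_pde b {(t, x). x > 0 \<and> 1 + \<epsilon> * t > 0} v"
proof (rule solves_pde_cong)
  have "{(t, x). 1 + \<epsilon> * t > 0 \<and> (t / (1 + \<epsilon> * t), x / (1 + \<epsilon> * t)\<^sup>2) \<in> {(t, x). x > 0}}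
      = {(t, x). x > 0 \<and> 1 + \<epsilon> * t > 0}"
    by (auto simp: zero_less_divide_iff)
  with solves_pde_appell[OF assms(1), of \<epsilon>]
  show "solves_pde b {(t, x). x > 0 \<and> 1 + \<epsilon> * t > 0} (\<lambda>t x. (1 + \<epsilon> * t) powr (- b) *
      exp (- \<epsilon> * x / (1 + \<epsilon> * t)) * u (t / (1 + \<epsilon> * t)) (x / (1 + \<epsilon> * t)\<^sup>2))"
    by simp
  have "{(t, x). x > 0 \<and> 1 + \<epsilon> * t > 0} = {p :: real \<times> real. 0 < snd p \<and> 0 < 1 + \<epsilon> * fst p}"
    by auto
  also have "open \<dots>"
    by (intro open_Collect_conj open_Collect_less continuous_intros)
  finally show "open {(t, x :: real). x > 0 \<and> 1 + \<epsilon> * t > 0}" .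
qed (use assms(2) in auto)

lemma powr_divide_square:
  fixes s x a :: real
  assumes "s > 0"
  shows "(x / s\<^sup>2) powr a = s powr (- 2 * a) * x powr a"
proof -
  have "s\<^sup>2 = s powr 2"
    using assms by (simp add: powr_numeral)
  then have "(s\<^sup>2) powr a = s powr (2 * a)"
    by (simp add: powr_powr)
  then show ?thesis
    by (simp add: powr_divide powr_minus_divide)
qed

lemma solves_pde_appell_power:
  fixes b \<epsilon> c0 c1 :: real
  shows "solves_pde b {(t, x). x > 0 \<and> 1 + \<epsilon> * t > 0}
    (\<lambda>t x. (1 + \<epsilon> * t) powr (- b) * exp (- \<epsilon> * x / (1 + \<epsilon> * t))
             * (c0 + c1 * (1 + \<epsilon> * t) powr (2 * (b - 1)) * x powr (1 - b)))"
  by (rule solves_pde_appell_stationary[OF solves_pde_power[of b c0 c1]]) (simp add: powr_divide_square)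

lemma solves_pde_appell_log:
  fixes \<epsilon> c0 c1 :: real
  shows "solves_pde 1 {(t, x). x > 0 \<and> 1 + \<epsilon> * t > 0}
    (\<lambda>t x. (1 + \<epsilon> * t) powr (- 1) * exp (- \<epsilon> * x / (1 + \<epsilon> * t))
             * (c0 + c1 * ln (sqrt x / (1 + \<epsilon> * t))))"
  by (rule solves_pde_appell_stationary[OF solves_pde_log[of c0 c1]]) (simp add: real_sqrt_divide)

theorem mainTheorem14:
  fixes b \<epsilon> :: real
  assumes "b > 0"
  shows "(\<forall>(u :: real \<Rightarrow> real \<Rightarrow> real) (D :: (real \<times> real) set).
            open D \<and> solves_pde b D u \<longrightarrow>
            solves_pde b {(t, x). 1 + \<epsilon> * t > 0 \<and> (t / (1 + \<epsilon> * t), x / (1 + \<epsilon> * t)\<^sup>2) \<in> D}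
              (\<lambda>t x. (1 + \<epsilon> * t) powr (- b) * exp (- \<epsilon> * x / (1 + \<epsilon> * t))
                       * u (t / (1 + \<epsilon> * t)) (x / (1 + \<epsilon> * t)\<^sup>2)))
       \<and> (\<forall>c0 c1 :: real. b \<noteq> 1 \<longrightarrow>
            solves_pde b {(t, x). x > 0 \<and> 1 + \<epsilon> * t > 0}
              (\<lambda>t x. (1 + \<epsilon> * t) powr (- b) * exp (- \<epsilon> * x / (1 + \<epsilon> * t))
                       * (c0 + c1 * (1 + \<epsilon> * t) powr (2 * (b - 1)) * x powr (1 - b))))
       \<and> (\<forall>c0 c1 :: real. b = 1 \<longrightarrow>
            solves_pde b {(t, x). x > 0 \<and> 1 + \<epsilon> * t > 0}
              (\<lambda>t x. (1 + \<epsilon> * t) powr (- 1) * exp (- \<epsilon> * x / (1 + \<epsilon> * t))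
                       * (c0 + c1 * ln (sqrt x / (1 + \<epsilon> * t)))))"
proof (intro conjI allI impI, goal_cases)
  case 1
  then show ?case by (intro solves_pde_appell) simp
next
  case 2
  show ?case by (rule solves_pde_appell_power)
next
  case 3
  show ?case unfolding \<open>b = 1\<close> by (rule solves_pde_appell_log)
qed

end
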